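(* Consider the sequential decision problem described in the context. (1) Given $\mathbf q=(q_1,\dots,q_T)\in\mathcal Q_B$, let $f_t(y^{t-1})=q_t(\cdot\mid\cdot,\cdot,y^{t-1})$; then $\tilde L_T(\mathbf f)=L_T(\mathbf q)$. (2) Given a decision policy $\mathbf f=(f_1,\dots,f_T)$, let $\mathbf q\in\mathcal Q_B$ be $q_t(y_t\mid x_t,s_t,y^{t-1})=a_t(y_t\mid x_t,s_t)$ with $a_t=f_t(y^{t-1})$; then $L_T(\mathbf q)=\tilde L_T(\mathbf f)$. Hence the sequential problem is equivalent to minimizing $L_T$ over $\mathcal Q_B$.
   Context: Let $\mathcal X=\{0,\dots,m_x\}$, $\mathcal Y=\{0,\dots,m_y\}$, $\mathcal S=\{0,\dots,m_s\}$ with $m_x\le m_y$. The demand $\{X_t\}$ is a time-homogeneous first-order Markov chain on $\mathcal X$ with transition matrix $Q$ and initial pmf $P_{X_1}$; $S_1\sim P_{S_1}$ independent of $\{X_t\}$. For an integer $w$ let $\mathcal Y_\circ(w)=\{y\in\mathcal Y:w+y\in\mathcal S\}$. $\mathcal Q_B$ is the set of charging policies $q_t(y\mid x_t,s_t,y^{t-1})$ (conditional pmfs on $\mathcal Y$ with $q_t(\mathcal Y_\circ(s_t-x_t)\mid x_t,s_t,y^{t-1})=1$), inducing $Y_t\sim q_t(\cdot\mid X_t,S_t,Y^{t-1})$, $S_{t+1}=S_t+Y_t-X_t$, and $L_T(\mathbf q)=\frac1TI^{\mathbf q}(X^T,S_1;Y^T)$. $\mathcal A$ is the set of conditional pmfs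 $a(y\mid x,s)$ with $a(\mathcal Y_\circ(s-x)\mid x,s)=1$ for all $(x,s)$. Sequential problem: a decision maker observes $Y^{t-1}$ and chooses $A_t=f_t(Y^{t-1})\in\mathcal A$; then $Y_t\sim A_t(\cdot\mid X_t,S_t)$ and $S_{t+1}=S_t+Y_t-X_t$. The per-step cost is $c_t(x_t,s_t,a_t,y^t;\mathbf f)=\log\frac{a_t(y_t\mid x_t,s_t)}{P^{\mathbf f}(Y_t=y_t\mid Y^{t-1}=y^{t-1})}$ and $\tilde L_T(\mathbf f)=\frac1T\mathbb E^{\mathbf f}\big[\sum_{t=1}^Tc_t(X_t,S_t,A_t,Y^t;\mathbf f)\big]$. *)

theory Defs
  imports Complex_Main
begin

text \<open>Alphabets: X = {0..mx}, Y = {0..my}, S = {0..ms}, all encoded as nat.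
  Time is indexed from 0 (Isabelle index t corresponds to the paper's t+1).
  A trajectory is a triple (xs, s1, ys) with xs = X^T, ys = Y^T (lists of length T).\<close>

definition Yo :: "nat \<Rightarrow> nat \<Rightarrow> int \<Rightarrow> nat set" where
  "Yo my ms w = {y. y \<le> my \<and> 0 \<le> w + int y \<and> w + int y \<le> int ms}"

definition in_A :: "nat \<Rightarrow> nat \<Rightarrow> nat \<Rightarrow> (nat \<Rightarrow> nat \<Rightarrow> nat \<Rightarrow> real) \<Rightarrow> bool" where
  "in_A mx my ms a \<longleftrightarrow>
     (\<forall>x\<le>mx. \<forall>s\<le>ms. (\<forall>y. 0 \<le> a x s y) \<and> (\<Sum>y\<le>my. a x s y) = 1 \<and>
        (\<forall>y. y \<notin> Yo my ms (int s - int x) \<longrightarrow> a x s y = 0))"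

text \<open>Charging policies q = (q_t): q t x s ys y = q_t(y | x, s, y^{t-1} = ys).\<close>
definition in_Q_B :: "nat \<Rightarrow> nat \<Rightarrow> nat \<Rightarrow> nat \<Rightarrow>
    (nat \<Rightarrow> nat \<Rightarrow> nat \<Rightarrow> nat list \<Rightarrow> nat \<Rightarrow> real) \<Rightarrow> bool" where
  "in_Q_B mx my ms T q \<longleftrightarrow>
     (\<forall>t<T. \<forall>ys. length ys = t \<and> set ys \<subseteq> {..my} \<longrightarrow>
        in_A mx my ms (\<lambda>x s y. q t x s ys y))"

definition is_decision_policy :: "nat \<Rightarrow> nat \<Rightarrow> nat \<Rightarrow> nat \<Rightarrow>
    (nat \<Rightarrow> nat list \<Rightarrow> (nat \<Rightarrow> nat \<Rightarrow> nat \<Rightarrow> real)) \<Rightarrow> bool" where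
  "is_decision_policy mx my ms T f \<longleftrightarrow>
     (\<forall>t<T. \<forall>ys. length ys = t \<and> set ys \<subseteq> {..my} \<longrightarrow> in_A mx my ms (f t ys))"

definition is_pmf_on :: "nat \<Rightarrow> (nat \<Rightarrow> real) \<Rightarrow> bool" where
  "is_pmf_on m p \<longleftrightarrow> (\<forall>z. 0 \<le> p z) \<and> (\<forall>z>m. p z = 0) \<and> (\<Sum>z\<le>m. p z) = 1"

definition is_stochastic :: "nat \<Rightarrow> (nat \<Rightarrow> nat \<Rightarrow> real) \<Rightarrow> bool" where
  "is_stochastic m Q \<longleftrightarrow> (\<forall>x\<le>m. is_pmf_on m (Q x))"

text \<open>Battery state S_{t}: S_{t+1} = S_t + Y_t - X_t (with positive probability this stays in S,
  so the truncated nat subtraction is never active on the support).\<close>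
fun state :: "nat \<Rightarrow> nat list \<Rightarrow> nat list \<Rightarrow> nat \<Rightarrow> nat" where
  "state s1 xs ys 0 = s1"
| "state s1 xs ys (Suc t) = state s1 xs ys t + ys ! t - xs ! t"

definition Omega :: "nat \<Rightarrow> nat \<Rightarrow> nat \<Rightarrow> nat \<Rightarrow> (nat list \<times> nat \<times> nat list) set" where
  "Omega mx my ms T = {(xs, s1, ys). length xs = T \<and> set xs \<subseteq> {..mx} \<and> s1 \<le> ms \<and>
                        length ys = T \<and> set ys \<subseteq> {..my}}"

text \<open>Joint pmf of (X^T, S_1, Y^T) when at time t, given Y^{t-1} = ys, the output is drawn
  from the kernel K t ys (arguments x s y).\<close>
definition joint :: "(nat \<Rightarrow> nat \<Rightarrow> real) \<Rightarrow> (nat \<Rightarrow> real) \<Rightarrow> (nat \<Rightarrow> real) \<Rightarrow> nat \<Rightarrow>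
    (nat \<Rightarrow> nat list \<Rightarrow> nat \<Rightarrow> nat \<Rightarrow> nat \<Rightarrow> real) \<Rightarrow> nat list \<times> nat \<times> nat list \<Rightarrow> real" where
  "joint Q PX1 PS1 T K = (\<lambda>(xs, s1, ys).
     PS1 s1 * PX1 (xs ! 0) * (\<Prod>t\<in>{1..<T}. Q (xs ! (t - 1)) (xs ! t)) *
     (\<Prod>t<T. K t (take t ys) (xs ! t) (state s1 xs ys t) (ys ! t)))"

definition jointQ where
  "jointQ Q PX1 PS1 T q = joint Q PX1 PS1 T (\<lambda>t ys x s y. q t x s ys y)"

definition jointF where
  "jointF Q PX1 PS1 T f = joint Q PX1 PS1 T f"

text \<open>Discrete mutual information I(X^T,S_1;Y^T) (natural log; 0 log 0 = 0 automatic).\<close>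
definition mutual_info_XS_Y :: "nat \<Rightarrow> nat \<Rightarrow> nat \<Rightarrow> nat \<Rightarrow>
    (nat list \<times> nat \<times> nat list \<Rightarrow> real) \<Rightarrow> real" where
  "mutual_info_XS_Y mx my ms T p =
     (\<Sum>\<omega>\<in>Omega mx my ms T.
        let pXS = (\<Sum>\<omega>'\<in>Omega mx my ms T.
                     if fst \<omega>' = fst \<omega> \<and> fst (snd \<omega>') = fst (snd \<omega>) then p \<omega>' else 0);
            pY = (\<Sum>\<omega>'\<in>Omega mx my ms T. if snd (snd \<omega>') = snd (snd \<omega>) then p \<omega>' else 0)
        in p \<omega> * ln (p \<omega> / (pXS * pY)))"

definition L_T where
  "L_T mx my ms Q PX1 PS1 T q = (1 / real T) * mutual_info_XS_Y mx my ms T (jointQ Q PX1 PS1 T q)"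

definition PY_prefix where
  "PY_prefix mx my ms Q PX1 PS1 T f t yt =
     (\<Sum>\<omega>\<in>Omega mx my ms T. if take t (snd (snd \<omega>)) = yt then jointF Q PX1 PS1 T f \<omega> else 0)"

definition cost where
  "cost mx my ms Q PX1 PS1 T f t = (\<lambda>(xs, s1, ys).
     ln (f t (take t ys) (xs ! t) (state s1 xs ys t) (ys ! t) /
         (PY_prefix mx my ms Q PX1 PS1 T f (Suc t) (take (Suc t) ys) /
          PY_prefix mx my ms Q PX1 PS1 T f t (take t ys))))"

definition tilde_L_T where
  "tilde_L_T mx my ms Q PX1 PS1 T f =
     (1 / real T) * (\<Sum>\<omega>\<in>Omega mx my ms T.
        jointF Q PX1 PS1 T f \<omega> * (\<Sum>t<T. cost mx my ms Q PX1 PS1 T f t \<omega>))"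

end

theory Submission imports Defs begin

text \<open>Both policy classes describe the same family of kernels, so they induce the same joint
  law P of (X^T, S_1, Y^T), which factors as P(x^T, s_1) times the product of the action
  probabilities a_t(y_t | x_t, s_t). Summing out y_T, y_{T-1}, ... shows that this product is
  the conditional law P(y^T | x^T, s_1), and in particular that P(x^T, s_1) is the input
  marginal. Along a trajectory of positive probability the costs telescope:
  \<Sum>_t ln (a_t / (P(y^{t+1}) / P(y^t))) = ln (P(y^T | x^T, s_1) / P(y^T)), whose expectation is
  the mutual information I(X^T, S_1; Y^T).\<close>

definition lists_len :: "'a set \<Rightarrow> nat \<Rightarrow> 'a list set" where
  "lists_len A n = {xs. set xs \<subseteq> A \<and> length xs = n}"

lemma finite_lists_len [simp]: "finite A \<Longrightarrow> finite (lists_len A n)"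
  by (simp add: lists_len_def finite_lists_length_eq)

lemma lists_len_0 [simp]: "lists_len A 0 = {[]}"
  by (auto simp: lists_len_def)

lemma nth_in_lists_len: "xs \<in> lists_len A n \<Longrightarrow> i < n \<Longrightarrow> xs ! i \<in> A"
  by (auto simp: lists_len_def)

lemma take_in_lists_len: "xs \<in> lists_len A n \<Longrightarrow> t \<le> n \<Longrightarrow> take t xs \<in> lists_len A t"
  using set_take_subset[of t xs] by (auto simp: lists_len_def)

lemma sum_lists_len_Suc:
  "(\<Sum>zs\<in>lists_len A (Suc n). F zs) = (\<Sum>zs\<in>lists_len A n. \<Sum>y\<in>A. F (zs @ [y]))"
proof -
  have "lists_len A (Suc n) = (\<lambda>(zs, y). zs @ [y]) ` (lists_len A n \<times> A)"
    by (auto simp: lists_len_def image_iff split_beta length_Suc_conv_rev)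
  moreover have "inj_on (\<lambda>(zs, y). zs @ [y]) (lists_len A n \<times> A)"
    by (auto simp: inj_on_def)
  ultimately show ?thesis
    by (simp add: sum.reindex sum.cartesian_product prod.case_distrib)
qed

definition path_weight :: "(nat \<Rightarrow> 'a list \<Rightarrow> 'a \<Rightarrow> real) \<Rightarrow> nat \<Rightarrow> 'a list \<Rightarrow> real" where
  "path_weight k n zs = (\<Prod>t<n. k t (take t zs) (zs ! t))"

lemma path_weight_0 [simp]: "path_weight k 0 zs = 1"
  by (simp add: path_weight_def)

lemma path_weight_snoc:
  "length zs = n \<Longrightarrow> path_weight k (Suc n) (zs @ [y]) = path_weight k n zs * k n zs y"
  by (simp add: path_weight_def nth_append)

lemma path_weight_eq_0_iff:
  "path_weight k n zs = 0 \<longleftrightarrow> (\<exists>t<n. k t (take t zs) (zs ! t) = 0)"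
  by (auto simp: path_weight_def)

text \<open>Drawing the letters one after another from the kernels k gives a pmf on words; k only
  has to be normalised after prefixes of positive weight.\<close>
lemma sum_path_weight_eq_1:
  assumes "\<And>t zs. t < n \<Longrightarrow> zs \<in> lists_len A t \<Longrightarrow> path_weight k t zs \<noteq> 0 \<Longrightarrow> (\<Sum>y\<in>A. k t zs y) = 1"
  shows "(\<Sum>zs\<in>lists_len A n. path_weight k n zs) = 1"
  using assms
proof (induction n)
  case (Suc n)
  have "(\<Sum>zs\<in>lists_len A (Suc n). path_weight k (Suc n) zs)
      = (\<Sum>zs\<in>lists_len A n. path_weight k n zs * (\<Sum>y\<in>A. k n zs y))"
    unfolding sum_lists_len_Suc
    by (intro sum.cong refl) (simp add: path_weight_snoc sum_distrib_left lists_len_def)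
  also have "\<dots> = (\<Sum>zs\<in>lists_len A n. path_weight k n zs)"
    by (intro sum.cong refl) (use Suc.prems in auto)
  also have "\<dots> = 1"
    using Suc by simp
  finally show ?case .
qed simp

definition demand_kernel :: "(nat \<Rightarrow> nat \<Rightarrow> real) \<Rightarrow> (nat \<Rightarrow> real) \<Rightarrow> nat \<Rightarrow> nat list \<Rightarrow> nat \<Rightarrow> real" where
  "demand_kernel Q PX1 t xs x = (if t = 0 then PX1 x else Q (xs ! (t - 1)) x)"

lemma sum_demand_path_weight:
  assumes "is_stochastic mx Q" and "is_pmf_on mx PX1"
  shows "(\<Sum>xs\<in>lists_len {..mx} n. path_weight (demand_kernel Q PX1) n xs) = 1"
proof (rule sum_path_weight_eq_1)
  fix t zs assume "t < n" and zs: "zs \<in> lists_len {..mx} t"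
  show "(\<Sum>x\<in>{..mx}. demand_kernel Q PX1 t zs x) = 1"
  proof (cases t)
    case (Suc i)
    then have "zs ! i \<le> mx"
      using nth_in_lists_len[OF zs, of i] by simp
    then show ?thesis
      using assms(1) Suc by (simp add: demand_kernel_def is_stochastic_def is_pmf_on_def)
  qed (use assms(2) in \<open>simp add: demand_kernel_def is_pmf_on_def\<close>)
qed

definition output_kernel ::
    "(nat \<Rightarrow> nat list \<Rightarrow> nat \<Rightarrow> nat \<Rightarrow> nat \<Rightarrow> real) \<Rightarrow> nat list \<Rightarrow> nat \<Rightarrow> nat \<Rightarrow> nat list \<Rightarrow> nat \<Rightarrow> real" where
  "output_kernel K xs s1 t ys y = K t ys (xs ! t) (state s1 xs ys t) y"

lemma state_take: "t \<le> n \<Longrightarrow> state s1 xs (take n ys) t = state s1 xs ys t"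
  by (induction t) auto

definition input_law :: "(nat \<Rightarrow> nat \<Rightarrow> real) \<Rightarrow> (nat \<Rightarrow> real) \<Rightarrow> (nat \<Rightarrow> real) \<Rightarrow> nat \<Rightarrow> nat list \<Rightarrow> nat \<Rightarrow> real" where
  "input_law Q PX1 PS1 T xs s1 = PS1 s1 * PX1 (xs ! 0) * (\<Prod>t\<in>{1..<T}. Q (xs ! (t - 1)) (xs ! t))"

lemma input_law_eq_path_weight:
  assumes "1 \<le> T"
  shows "input_law Q PX1 PS1 T xs s1 = PS1 s1 * path_weight (demand_kernel Q PX1) T xs"
proof -
  have "{..<T} = insert 0 {1..<T}"
    using assms by auto
  then show ?thesis
    unfolding input_law_def path_weight_def by (simp add: demand_kernel_def mult.assoc)
qed

lemma joint_eq_input_law_mult: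
  "joint Q PX1 PS1 T K (xs, s1, ys) = input_law Q PX1 PS1 T xs s1 * path_weight (output_kernel K xs s1) T ys"
  by (simp add: joint_def input_law_def path_weight_def output_kernel_def state_take)

lemma Omega_eq: "Omega mx my ms T = lists_len {..mx} T \<times> {..ms} \<times> lists_len {..my} T"
  by (auto simp: Omega_def lists_len_def)

lemma sum_Omega:
  "(\<Sum>\<omega>\<in>Omega mx my ms T. h \<omega>) =
     (\<Sum>xs\<in>lists_len {..mx} T. \<Sum>s1\<le>ms. \<Sum>ys\<in>lists_len {..my} T. h (xs, s1, ys))"
  unfolding Omega_eq by (simp add: sum.cartesian_product)

lemma in_A_nonneg: "in_A mx my ms a \<Longrightarrow> x \<le> mx \<Longrightarrow> s \<le> ms \<Longrightarrow> 0 \<le> a x s y"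
  by (simp add: in_A_def)

lemma in_A_sum: "in_A mx my ms a \<Longrightarrow> x \<le> mx \<Longrightarrow> s \<le> ms \<Longrightarrow> (\<Sum>y\<le>my. a x s y) = 1"
  by (simp add: in_A_def)

text \<open>An admissible action never drives the battery outside its range, so the truncated
  subtraction in state is harmless along every output of positive probability.\<close>
lemma in_A_next_state_le:
  assumes "in_A mx my ms a" and "x \<le> mx" and "s \<le> ms" and "a x s y \<noteq> 0"
  shows "s + y - x \<le> ms"
proof -
  have "y \<in> Yo my ms (int s - int x)"
    using assms unfolding in_A_def by blast
  then show ?thesis
    by (simp add: Yo_def) arith
qed

context
  fixes mx my ms T :: nat and K :: "nat \<Rightarrow> nat list \<Rightarrow> nat \<Rightarrow> nat \<Rightarrow> nat \<Rightarrow> real"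
    and xs :: "nat list" and s1 :: nat
  assumes policy: "is_decision_policy mx my ms T K"
    and xs: "xs \<in> lists_len {..mx} T" and s1: "s1 \<le> ms"
begin

lemma policy_action_in_A:
  "t < T \<Longrightarrow> zs \<in> lists_len {..my} t \<Longrightarrow> in_A mx my ms (K t zs)"
  using policy by (simp add: is_decision_policy_def lists_len_def)

lemma demand_le: "t < T \<Longrightarrow> xs ! t \<le> mx"
  using nth_in_lists_len[OF xs] by simp

lemma state_le_capacity:
  assumes ys: "ys \<in> lists_len {..my} n" and "n \<le> T"
    and "path_weight (output_kernel K xs s1) n ys \<noteq> 0"
  shows "t \<le> n \<Longrightarrow> state s1 xs ys t \<le> ms"
proof (induction t)
  case (Suc t)
  then have "t < T"
    using assms(2) by simp
  have "take t ys \<in> lists_len {..my} t"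
    using take_in_lists_len[OF ys] Suc.prems by simp
  moreover have "K t (take t ys) (xs ! t) (state s1 xs ys t) (ys ! t) \<noteq> 0"
    using assms(3) Suc.prems by (auto simp: path_weight_eq_0_iff output_kernel_def state_take)
  ultimately have "state s1 xs ys t + ys ! t - xs ! t \<le> ms"
    using in_A_next_state_le[OF policy_action_in_A demand_le] \<open>t < T\<close> Suc by simp
  then show ?case
    by simp
qed (use s1 in simp)

lemma output_path_weight_nonneg:
  assumes ys: "ys \<in> lists_len {..my} n" and "n \<le> T"
  shows "0 \<le> path_weight (output_kernel K xs s1) n ys"
proof (cases "path_weight (output_kernel K xs s1) n ys = 0")
  case False
  have "0 \<le> K t (take t ys) (xs ! t) (state s1 xs ys t) (ys ! t)" if "t < n" for t
  proof (rule in_A_nonneg[OF policy_action_in_A demand_le])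
    show "take t ys \<in> lists_len {..my} t"
      using take_in_lists_len[OF ys] that by simp
    show "state s1 xs ys t \<le> ms"
      using state_le_capacity[OF ys assms(2) False] that by simp
  qed (use that assms(2) in auto)
  then show ?thesis
    unfolding path_weight_def output_kernel_def by (auto intro: prod_nonneg simp: state_take)
qed simp

lemma sum_output_path_weight:
  assumes "n \<le> T"
  shows "(\<Sum>ys\<in>lists_len {..my} n. path_weight (output_kernel K xs s1) n ys) = 1"
proof (rule sum_path_weight_eq_1)
  fix t zs assume "t < n" and zs: "zs \<in> lists_len {..my} t"
    and "path_weight (output_kernel K xs s1) t zs \<noteq> 0"
  then have "state s1 xs zs t \<le> ms"
    using state_le_capacity[OF zs] assms by simp
  then show "(\<Sum>y\<in>{..my}. output_kernel K xs s1 t zs y) = 1"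
    using in_A_sum[OF policy_action_in_A[OF _ zs] demand_le] \<open>t < n\<close> assms
    by (simp add: output_kernel_def)
qed

end

context
  fixes mx my ms T :: nat and K :: "nat \<Rightarrow> nat list \<Rightarrow> nat \<Rightarrow> nat \<Rightarrow> nat \<Rightarrow> real"
    and Q :: "nat \<Rightarrow> nat \<Rightarrow> real" and PX1 PS1 :: "nat \<Rightarrow> real"
  assumes policy: "is_decision_policy mx my ms T K" and T: "1 \<le> T"
    and Q: "is_stochastic mx Q" and PX1: "is_pmf_on mx PX1" and PS1: "is_pmf_on ms PS1"
begin

abbreviation "p \<equiv> joint Q PX1 PS1 T K"
abbreviation "PY \<equiv> PY_prefix mx my ms Q PX1 PS1 T K"

lemma input_law_nonneg:
  assumes xs: "xs \<in> lists_len {..mx} T"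
  shows "0 \<le> input_law Q PX1 PS1 T xs s1"
proof -
  have "0 \<le> Q (xs ! (t - 1)) (xs ! t)" if "t \<in> {1..<T}" for t
  proof -
    have "xs ! (t - 1) \<le> mx"
      using nth_in_lists_len[OF xs, of "t - 1"] that by auto
    then show ?thesis
      using Q unfolding is_stochastic_def is_pmf_on_def by blast
  qed
  then have "0 \<le> (\<Prod>t\<in>{1..<T}. Q (xs ! (t - 1)) (xs ! t))"
    by (rule prod_nonneg)
  then show ?thesis
    using PX1 PS1 unfolding input_law_def is_pmf_on_def by simp
qed

lemma joint_nonneg: "\<omega> \<in> Omega mx my ms T \<Longrightarrow> 0 \<le> p \<omega>"
  using input_law_nonneg output_path_weight_nonneg[OF policy]
  by (auto simp: Omega_eq joint_eq_input_law_mult)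

lemma sum_joint_eq_1: "(\<Sum>\<omega>\<in>Omega mx my ms T. p \<omega>) = 1"
proof -
  have "(\<Sum>\<omega>\<in>Omega mx my ms T. p \<omega>) = (\<Sum>xs\<in>lists_len {..mx} T. \<Sum>s1\<le>ms.
      input_law Q PX1 PS1 T xs s1 * (\<Sum>ys\<in>lists_len {..my} T. path_weight (output_kernel K xs s1) T ys))"
    by (simp add: sum_Omega joint_eq_input_law_mult sum_distrib_left)
  also have "\<dots> = (\<Sum>xs\<in>lists_len {..mx} T. \<Sum>s1\<le>ms. PS1 s1 * path_weight (demand_kernel Q PX1) T xs)"
    using sum_output_path_weight[OF policy] by (simp add: input_law_eq_path_weight[OF T])
  also have "\<dots> = 1"
    using PS1 sum_demand_path_weight[OF Q PX1]
    by (simp add: sum_distrib_right[symmetric] sum_distrib_left[symmetric] is_pmf_on_def)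
  finally show ?thesis .
qed

lemma input_marginal:
  assumes "(xs, s1, ys) \<in> Omega mx my ms T"
  shows "(\<Sum>\<omega>\<in>Omega mx my ms T. if fst \<omega> = xs \<and> fst (snd \<omega>) = s1 then p \<omega> else 0)
    = input_law Q PX1 PS1 T xs s1"
proof -
  have pull_if: "(\<Sum>y\<in>A. if P then f y else 0) = (if P then sum f A else 0)" for P A and f :: "_ \<Rightarrow> real"
    by simp
  have "(\<Sum>\<omega>\<in>Omega mx my ms T. if fst \<omega> = xs \<and> fst (snd \<omega>) = s1 then p \<omega> else 0)
      = (\<Sum>ys\<in>lists_len {..my} T. p (xs, s1, ys))"
    using assms unfolding sum_Omega
    by (simp add: Omega_eq if_if_eq_conj[symmetric] pull_if sum.delta' del: if_if_eq_conj)
  also have "\<dots> = input_law Q PX1 PS1 T xs s1"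
    using sum_output_path_weight[OF policy, of xs s1 T] assms
    by (simp add: Omega_eq joint_eq_input_law_mult sum_distrib_left[symmetric])
  finally show ?thesis .
qed

lemma PY_prefix_Nil: "PY 0 [] = 1"
  using sum_joint_eq_1 by (simp add: PY_prefix_def jointF_def)

lemma joint_le_PY_prefix:
  assumes "(xs, s1, ys) \<in> Omega mx my ms T"
  shows "p (xs, s1, ys) \<le> PY t (take t ys)"
proof -
  have "p (xs, s1, ys) \<le> (\<Sum>\<omega>\<in>Omega mx my ms T. if take t (snd (snd \<omega>)) = take t ys then p \<omega> else 0)"
    using member_le_sum[OF assms, of "\<lambda>\<omega>. if take t (snd (snd \<omega>)) = take t ys then p \<omega> else 0"]
    by (simp add: joint_nonneg Omega_eq)
  then show ?thesis
    unfolding PY_prefix_def jointF_def .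
qed

lemma output_marginal:
  assumes "(xs, s1, ys) \<in> Omega mx my ms T"
  shows "(\<Sum>\<omega>\<in>Omega mx my ms T. if snd (snd \<omega>) = ys then p \<omega> else 0) = PY T ys"
  unfolding PY_prefix_def jointF_def
  using assms by (intro sum.cong refl) (auto simp: Omega_def)

text \<open>The predictive probabilities P(Y^{t+1}) / P(Y^t) in the costs telescope, leaving
  ln (P(Y^T | X^T, S_1) / P(Y^T)), the information density.\<close>
lemma sum_cost_eq_information_density:
  assumes \<omega>: "(xs, s1, ys) \<in> Omega mx my ms T" and pos: "p (xs, s1, ys) > 0"
  shows "(\<Sum>t<T. cost mx my ms Q PX1 PS1 T K t (xs, s1, ys))
    = ln (p (xs, s1, ys) / (input_law Q PX1 PS1 T xs s1 * PY T ys))"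
proof -
  let ?k = "output_kernel K xs s1"
  define P where "P t = PY t (take t ys)" for t
  have ys: "length ys = T"
    using \<omega> by (simp add: Omega_def)
  have g: "input_law Q PX1 PS1 T xs s1 \<noteq> 0" and w: "path_weight ?k T ys \<noteq> 0"
    using pos by (auto simp: joint_eq_input_law_mult)
  have P: "P t \<noteq> 0" for t
    using joint_le_PY_prefix[OF \<omega>, of t] pos unfolding P_def by linarith
  have k: "?k t (take t ys) (ys ! t) \<noteq> 0" if "t < T" for t
    using w that by (auto simp: path_weight_eq_0_iff)
  have "(\<Sum>t<T. cost mx my ms Q PX1 PS1 T K t (xs, s1, ys))
      = (\<Sum>t<T. ln (?k t (take t ys) (ys ! t)) - (ln (P (Suc t)) - ln (P t)))"
    using k P by (intro sum.cong refl) (simp add: cost_def output_kernel_def state_take P_def ln_div ln_mult)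
  also have "\<dots> = ln (path_weight ?k T ys) - (ln (P T) - ln (P 0))"
  proof -
    have "ln (path_weight ?k T ys) = (\<Sum>t<T. ln (?k t (take t ys) (ys ! t)))"
      unfolding path_weight_def using k by (intro ln_prod) auto
    then show ?thesis
      using sum_lessThan_telescope[of "\<lambda>t. ln (P t)" T] by (simp add: sum_subtractf)
  qed
  also have "\<dots> = ln (path_weight ?k T ys / PY T ys)"
    using P[of T] w by (simp add: P_def ys PY_prefix_Nil ln_div)
  also have "\<dots> = ln (p (xs, s1, ys) / (input_law Q PX1 PS1 T xs s1 * PY T ys))"
    using g by (simp add: joint_eq_input_law_mult)
  finally show ?thesis .
qed

lemma tilde_L_T_eq_mutual_info:
  "tilde_L_T mx my ms Q PX1 PS1 T K = 1 / real T * mutual_info_XS_Y mx my ms T p"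
  unfolding tilde_L_T_def mutual_info_XS_Y_def jointF_def
proof (intro arg_cong[where f = "\<lambda>x. 1 / real T * x"] sum.cong refl)
  fix \<omega> assume \<omega>: "\<omega> \<in> Omega mx my ms T"
  obtain xs s1 ys where \<omega>_eq: "\<omega> = (xs, s1, ys)"
    by (cases \<omega>)
  show "p \<omega> * (\<Sum>t<T. cost mx my ms Q PX1 PS1 T K t \<omega>) =
    (let pXS = \<Sum>\<omega>'\<in>Omega mx my ms T. if fst \<omega>' = fst \<omega> \<and> fst (snd \<omega>') = fst (snd \<omega>) then p \<omega>' else 0;
         pY = \<Sum>\<omega>'\<in>Omega mx my ms T. if snd (snd \<omega>') = snd (snd \<omega>) then p \<omega>' else 0
     in p \<omega> * ln (p \<omega> / (pXS * pY)))"
  proof (cases "p \<omega> = 0")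
    case False
    then have "p \<omega> > 0"
      using joint_nonneg[OF \<omega>] by simp
    then show ?thesis
      using \<omega> unfolding \<omega>_eq Let_def
      by (simp add: sum_cost_eq_information_density input_marginal output_marginal)
  qed simp
qed

end

lemma decision_policy_iff_in_Q_B:
  "is_decision_policy mx my ms T (\<lambda>t ys x s y. q t x s ys y) \<longleftrightarrow> in_Q_B mx my ms T q"
  by (simp add: is_decision_policy_def in_Q_B_def)

lemma tilde_L_T_eq_L_T:
  assumes "in_Q_B mx my ms T q" and "1 \<le> T"
    and "is_stochastic mx Q" and "is_pmf_on mx PX1" and "is_pmf_on ms PS1"
  shows "tilde_L_T mx my ms Q PX1 PS1 T (\<lambda>t ys x s y. q t x s ys y) = L_T mx my ms Q PX1 PS1 T q"
  unfolding L_T_def jointQ_def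
  using assms by (intro tilde_L_T_eq_mutual_info) (simp_all add: decision_policy_iff_in_Q_B)

theorem proposition2:
  fixes mx my ms T :: nat
    and Q :: "nat \<Rightarrow> nat \<Rightarrow> real" and PX1 PS1 :: "nat \<Rightarrow> real"
  assumes "mx \<le> my" and "1 \<le> T"
    and "is_stochastic mx Q" and "is_pmf_on mx PX1" and "is_pmf_on ms PS1"
  shows "(\<forall>q f. in_Q_B mx my ms T q \<longrightarrow> (\<forall>t ys. f t ys = (\<lambda>x s y. q t x s ys y)) \<longrightarrow>
              is_decision_policy mx my ms T f \<and>
              tilde_L_T mx my ms Q PX1 PS1 T f = L_T mx my ms Q PX1 PS1 T q)
       \<and> (\<forall>f q. is_decision_policy mx my ms T f \<longrightarrow> (\<forall>t x s ys y. q t x s ys y = f t ys x s y) \<longrightarrow>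
              in_Q_B mx my ms T q \<and>
              L_T mx my ms Q PX1 PS1 T q = tilde_L_T mx my ms Q PX1 PS1 T f)"
proof (intro conjI allI impI)
  fix q f
  assume q: "in_Q_B mx my ms T q" and "\<forall>t ys. f t ys = (\<lambda>x s y. q t x s ys y)"
  then have f: "f = (\<lambda>t ys x s y. q t x s ys y)"
    by (intro ext) simp
  show "is_decision_policy mx my ms T f"
    unfolding f decision_policy_iff_in_Q_B by (rule q)
  show "tilde_L_T mx my ms Q PX1 PS1 T f = L_T mx my ms Q PX1 PS1 T q"
    unfolding f by (rule tilde_L_T_eq_L_T[OF q assms(2-5)])
next
  fix f q
  assume f: "is_decision_policy mx my ms T f" and "\<forall>t x s ys y. q t x s ys y = f t ys x s y"
  then have f_eq: "f = (\<lambda>t ys x s y. q t x s ys y)"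
    by (intro ext) simp
  show q: "in_Q_B mx my ms T q"
    using f unfolding f_eq decision_policy_iff_in_Q_B .
  show "L_T mx my ms Q PX1 PS1 T q = tilde_L_T mx my ms Q PX1 PS1 T f"
    unfolding f_eq by (rule tilde_L_T_eq_L_T[OF q assms(2-5), symmetric])
qed

end
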